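(* Assume $\delta\in(0,1]$. Consider a critical sequence of symmetric action profiles $(p,q)$ with $p>0$, and let $\omega(n)\to\infty$. Then for every firm $i$, $$\mathbb P\big[|I_i(\mathbf p,\mathbf q)|>\omega(n)\big]\to0\quad\text{as }n\to\infty.$$
   Context: Model (for each number of firms $n\ge 2$). There are $n$ firms $1,\dots,n$; firm $i$ can discover a single idea, also labelled $i$. A parameter $\delta\in[0,1]$ is fixed. All firms use the action $(p,q)\in[0,1)\times[0,1]$ (depending on $n$). Idea $i$ is discovered independently with probability $p$; $I$ is the random set of discovered ideas. The interaction rate is $\iota(q,q)=q^2$. For each ordered pair $i\neq j$, independently, $i$ learns directly from $j$ with probability $\iota(q,q)$, and conditional on this, independently with probability $\delta$, $i$ also learns indirectly through $j$. The indirect-learning network has an edge $j\to i$ whenever $i$ learns indirectly through $j$. $I_i(\mathbf p,\mathbf q)=\{j\in I\setminus\{i\}:$ some firm $m$, with $m=i$ or with a directed path from $m$ to $i$ in the indirect-learning network, learns directly from $j\}$. The sequence (indexed by $n\to\infty$) is critical if $\lim_n\delta\iota(q,q)n=1$. *)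

theory Defs
  imports Complex_Main
begin

text \<open>Firms and ideas are labelled 0,...,n-1. An outcome of the random experiment
  is a triple (I, D, N):
  I = set of discovered ideas;
  D = set of ordered pairs (i,j), i ~= j, such that firm i learns directly from j;
  N = subset of D of pairs (i,j) such that i also learns indirectly through j
      (this gives an edge j -> i of the indirect-learning network).\<close>

definition offdiag :: "nat \<Rightarrow> (nat \<times> nat) set" where
  "offdiag n = {(i,j). i < n \<and> j < n \<and> i \<noteq> j}"

definition outcomes :: "nat \<Rightarrow> (nat set \<times> (nat \<times> nat) set \<times> (nat \<times> nat) set) set" where
  "outcomes n = {(I,D,N). I \<subseteq> {..<n} \<and> D \<subseteq> offdiag n \<and> N \<subseteq> D}"

definition iota :: "real \<Rightarrow> real \<Rightarrow> real" where
  "iota q q' = q * q'"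

definition weight :: "nat \<Rightarrow> real \<Rightarrow> real \<Rightarrow> real \<Rightarrow>
    (nat set \<times> (nat \<times> nat) set \<times> (nat \<times> nat) set) \<Rightarrow> real" where
  "weight n p q \<delta> \<omega> = (case \<omega> of (I,D,N) \<Rightarrow>
      (\<Prod>j<n. if j \<in> I then p else 1 - p) *
      (\<Prod>e\<in>offdiag n. if e \<in> N then iota q q * \<delta>
                        else if e \<in> D then iota q q * (1 - \<delta>)
                        else 1 - iota q q))"

definition prob_event :: "nat \<Rightarrow> real \<Rightarrow> real \<Rightarrow> real \<Rightarrow>
    ((nat set \<times> (nat \<times> nat) set \<times> (nat \<times> nat) set) \<Rightarrow> bool) \<Rightarrow> real" where
  "prob_event n p q \<delta> E = (\<Sum>\<omega>\<in>{\<omega> \<in> outcomes n. E \<omega>}. weight n p q \<delta> \<omega>)"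

definition ind_net :: "(nat \<times> nat) set \<Rightarrow> (nat \<times> nat) set" where
  "ind_net N = {(j,i). (i,j) \<in> N}"

definition learned :: "nat \<Rightarrow> (nat set \<times> (nat \<times> nat) set \<times> (nat \<times> nat) set) \<Rightarrow> nat set" where
  "learned i \<omega> = (case \<omega> of (I,D,N) \<Rightarrow>
     {j \<in> I - {i}. \<exists>m. (m = i \<or> (m,i) \<in> (ind_net N)\<^sup>+) \<and> (m,j) \<in> D})"

end

theory Submission
  imports Defs "HOL-Library.FuncSet"
begin

text \<open>Firm \<open>i\<close> learns idea \<open>j\<close> only through a firm \<open>m\<close> that reaches \<open>i\<close> along
  indirect-learning edges and learns directly from \<open>j\<close>, so \<open>|I\<^sub>i|\<close> is at most the number of
  pairs (path into \<open>i\<close>, idea). Fix \<open>K\<close>. If \<open>i\<close> has fewer than \<open>K\<close> ancestors in the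
  indirect-learning network, these paths have at most \<open>K\<close> vertices and the expected number
  of such pairs is at most \<open>n q\<^sup>2 (\<Sum>l\<le>K. (n \<delta> q\<^sup>2)\<^sup>l) = O\<^sub>K(1)\<close>, so by Markov's
  inequality it exceeds \<open>\<omega>(n)\<close> with vanishing probability.

  It remains to bound the probability of at least \<open>K\<close> ancestors. The event that the ancestor
  set equals \<open>S\<close> depends only on the edges whose learner lies in \<open>S\<close>, so its probability at
  edge probability \<open>a = \<delta> q\<^sup>2\<close> is at least
  \<open>(a/a')\<^bsup>|S|-1\<^esup> ((1-a)/(1-a'))\<^bsup>|S| n\<^esup>\<close> times its probability at the subcritical edge
  probability \<open>a' = c/n\<close>, \<open>c < 1\<close>. At criticality this factor tends to
  \<open>c\<^bsup>1-|S|\<^esup> e\<^bsup>-|S|(1-c)\<^esup> \<ge> c\<close>, while in the subcritical network the expected number of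
  paths into \<open>i\<close> is at most \<open>1/(1-c)\<close>. Hence the ancestor set has at least \<open>K\<close> elements
  with probability at most about \<open>1 - c\<^sup>2 + 1/((1-c) K)\<close>, which is small for \<open>c\<close> close
  to 1 and \<open>K\<close> large.\<close>

section \<open>Sums of products over function spaces\<close>

lemma sum_prod_PiE_indicator:
  fixes w :: "'a \<Rightarrow> 'b \<Rightarrow> real"
  assumes fX: "finite X" and fS: "\<And>x. x \<in> X \<Longrightarrow> finite (S x)"
  shows "(\<Sum>f\<in>PiE X S. (\<Prod>x\<in>X. w x (f x)) * (if \<forall>x\<in>X. f x \<in> T x then 1 else 0))
       = (\<Prod>x\<in>X. \<Sum>s\<in>S x \<inter> T x. w x s)"
proof -
  have fin: "finite (PiE X S)" using fX fS by (intro finite_PiE) auto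
  have "(\<Sum>f\<in>PiE X S. (\<Prod>x\<in>X. w x (f x)) * (if \<forall>x\<in>X. f x \<in> T x then 1 else 0))
      = (\<Sum>f\<in>{f\<in>PiE X S. \<forall>x\<in>X. f x \<in> T x}. (\<Prod>x\<in>X. w x (f x)))"
    using fin by (simp add: sum.inter_filter if_distrib cong: if_cong)
  also have "{f\<in>PiE X S. \<forall>x\<in>X. f x \<in> T x} = PiE X (\<lambda>x. S x \<inter> T x)"
    by (auto simp: PiE_iff extensional_def)
  also have "(\<Sum>f\<in>PiE X (\<lambda>x. S x \<inter> T x). (\<Prod>x\<in>X. w x (f x))) = (\<Prod>x\<in>X. \<Sum>s\<in>S x \<inter> T x. w x s)"
    using fX fS by (subst prod_sum_PiE) auto
  finally show ?thesis .
qed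

lemma sum_prod_PiE_pushforward:
  fixes w :: "'a \<Rightarrow> 'b \<Rightarrow> real"
  assumes fX: "finite X" and fS: "\<And>x. x \<in> X \<Longrightarrow> finite (S x)"
  shows "(\<Sum>f\<in>PiE X S. (\<Prod>x\<in>X. w x (f x)) * F (\<lambda>x\<in>X. h x (f x)))
       = (\<Sum>g\<in>PiE X (\<lambda>x. h x ` S x). (\<Prod>x\<in>X. \<Sum>s\<in>{s\<in>S x. h x s = g x}. w x s) * F g)"
proof -
  define M where "M f = (\<lambda>x\<in>X. h x (f x))" for f :: "'a \<Rightarrow> 'b"
  have fin: "finite (PiE X S)" using fX fS by (intro finite_PiE) auto
  have finG: "finite (PiE X (\<lambda>x. h x ` S x))" using fX fS by (intro finite_PiE) auto
  have sub: "M ` PiE X S \<subseteq> PiE X (\<lambda>x. h x ` S x)"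
    by (auto simp: M_def PiE_iff)
  have "(\<Sum>f\<in>PiE X S. (\<Prod>x\<in>X. w x (f x)) * F (M f))
      = (\<Sum>g\<in>PiE X (\<lambda>x. h x ` S x). \<Sum>f\<in>{f. f \<in> PiE X S \<and> M f = g}. (\<Prod>x\<in>X. w x (f x)) * F (M f))"
    by (rule sum.group[OF fin finG sub, symmetric])
  also have "\<dots> = (\<Sum>g\<in>PiE X (\<lambda>x. h x ` S x). (\<Prod>x\<in>X. \<Sum>s\<in>{s\<in>S x. h x s = g x}. w x s) * F g)"
  proof (rule sum.cong[OF refl])
    fix g assume g: "g \<in> PiE X (\<lambda>x. h x ` S x)"
    have eq: "{f. f \<in> PiE X S \<and> M f = g} = PiE X (\<lambda>x. {s\<in>S x. h x s = g x})"
    proof (intro set_eqI iffI)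
      fix f assume "f \<in> {f. f \<in> PiE X S \<and> M f = g}"
      then show "f \<in> PiE X (\<lambda>x. {s\<in>S x. h x s = g x})"
        by (auto simp: PiE_iff M_def fun_eq_iff split: if_splits)
    next
      fix f assume f: "f \<in> PiE X (\<lambda>x. {s\<in>S x. h x s = g x})"
      have "M f = g" using f g by (auto simp: PiE_iff M_def fun_eq_iff extensional_def)
      with f show "f \<in> {f. f \<in> PiE X S \<and> M f = g}" by (auto simp: PiE_iff)
    qed
    have "(\<Sum>f\<in>{f. f \<in> PiE X S \<and> M f = g}. (\<Prod>x\<in>X. w x (f x)) * F (M f))
        = (\<Sum>f\<in>PiE X (\<lambda>x. {s\<in>S x. h x s = g x}). (\<Prod>x\<in>X. w x (f x))) * F g"
      unfolding eq[symmetric] by (simp add: sum_distrib_right)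
    also have "\<dots> = (\<Prod>x\<in>X. \<Sum>s\<in>{s\<in>S x. h x s = g x}. w x s) * F g"
      using fX fS by (subst prod_sum_PiE) auto
    finally show "(\<Sum>f\<in>{f. f \<in> PiE X S \<and> M f = g}. (\<Prod>x\<in>X. w x (f x)) * F (M f))
        = (\<Prod>x\<in>X. \<Sum>s\<in>{s\<in>S x. h x s = g x}. w x s) * F g" .
  qed
  finally show ?thesis unfolding M_def .
qed

section \<open>The learning network as a random edge-state configuration\<close>

text \<open>A configuration assigns to each ordered pair \<open>(i, j)\<close>, \<open>i \<noteq> j\<close>, the state 0 (firm
  \<open>i\<close> does not learn directly from \<open>j\<close>), 1 (direct learning only) or 2 (direct and indirect
  learning), independently with probabilities \<open>d\<close>, \<open>b\<close>, \<open>a\<close>. The learning model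
  corresponds to \<open>a = q\<^sup>2 \<delta>\<close>, \<open>b = q\<^sup>2 (1 - \<delta>)\<close>, \<open>d = 1 - q\<^sup>2\<close>.\<close>

definition states :: "nat set" where "states = {0,1,2}"

definition state_weight :: "real \<Rightarrow> real \<Rightarrow> real \<Rightarrow> nat \<Rightarrow> real" where
  "state_weight a b d s = (if s = 2 then a else if s = 1 then b else d)"

definition config_weight :: "nat \<Rightarrow> real \<Rightarrow> real \<Rightarrow> real \<Rightarrow> (nat \<times> nat \<Rightarrow> nat) \<Rightarrow> real" where
  "config_weight n a b d f = (\<Prod>x\<in>offdiag n. state_weight a b d (f x))"

definition configs :: "nat \<Rightarrow> (nat \<times> nat \<Rightarrow> nat) set" where
  "configs n = PiE (offdiag n) (\<lambda>_. states)"

definition expect :: "nat \<Rightarrow> real \<Rightarrow> real \<Rightarrow> real \<Rightarrow> ((nat \<times> nat \<Rightarrow> nat) \<Rightarrow> real) \<Rightarrow> real" where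
  "expect n a b d Z = (\<Sum>f\<in>configs n. config_weight n a b d f * Z f)"

definition prob :: "nat \<Rightarrow> real \<Rightarrow> real \<Rightarrow> real \<Rightarrow> ((nat \<times> nat \<Rightarrow> nat) \<Rightarrow> bool) \<Rightarrow> real" where
  "prob n a b d E = expect n a b d (\<lambda>f. if E f then 1 else 0)"

definition indirect :: "nat \<Rightarrow> (nat \<times> nat \<Rightarrow> nat) \<Rightarrow> (nat \<times> nat) set" where
  "indirect n f = {x\<in>offdiag n. f x = 2}"

definition direct :: "nat \<Rightarrow> (nat \<times> nat \<Rightarrow> nat) \<Rightarrow> (nat \<times> nat) set" where
  "direct n f = {x\<in>offdiag n. f x \<noteq> 0}"

lemma finite_offdiag[simp]: "finite (offdiag n)"
  by (rule finite_subset[of _ "{..<n} \<times> {..<n}"]) (auto simp: offdiag_def)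

lemma finite_configs[simp]: "finite (configs n)"
  unfolding configs_def states_def by (intro finite_PiE) auto

lemma config_weight_nonneg: "0 \<le> a \<Longrightarrow> 0 \<le> b \<Longrightarrow> 0 \<le> d \<Longrightarrow> 0 \<le> config_weight n a b d f"
  unfolding config_weight_def state_weight_def by (intro prod_nonneg) auto

lemma expect_mono:
  assumes "0 \<le> a" "0 \<le> b" "0 \<le> d" "\<And>f. f \<in> configs n \<Longrightarrow> Z f \<le> Z' f"
  shows "expect n a b d Z \<le> expect n a b d Z'"
  unfolding expect_def using assms config_weight_nonneg[OF assms(1-3)]
  by (intro sum_mono mult_left_mono) auto

lemma expect_cong:
  assumes "\<And>f. f \<in> configs n \<Longrightarrow> Z f = Z' f"
  shows "expect n a b d Z = expect n a b d Z'"
  unfolding expect_def using assms by (intro sum.cong refl) auto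

lemma expect_add: "expect n a b d (\<lambda>f. Z f + Z' f) = expect n a b d Z + expect n a b d Z'"
  unfolding expect_def by (simp add: distrib_left sum.distrib)

lemma expect_cmult: "expect n a b d (\<lambda>f. c * Z f) = c * expect n a b d Z"
  unfolding expect_def by (simp add: sum_distrib_left mult_ac)

lemma expect_sum: "finite Y \<Longrightarrow> expect n a b d (\<lambda>f. \<Sum>y\<in>Y. Z y f) = (\<Sum>y\<in>Y. expect n a b d (Z y))"
  unfolding expect_def by (simp add: sum_distrib_left sum.swap[of _ "configs n"])

lemma prob_cong:
  assumes "\<And>f. f \<in> configs n \<Longrightarrow> E f = E' f"
  shows "prob n a b d E = prob n a b d E'"
  unfolding prob_def expect_def using assms by (intro sum.cong refl) auto

lemma prob_mono:
  assumes "0 \<le> a" "0 \<le> b" "0 \<le> d" "\<And>f. f \<in> configs n \<Longrightarrow> E f \<Longrightarrow> E' f"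
  shows "prob n a b d E \<le> prob n a b d E'"
  unfolding prob_def using assms by (intro expect_mono) auto

lemma prob_nonneg: "0 \<le> a \<Longrightarrow> 0 \<le> b \<Longrightarrow> 0 \<le> d \<Longrightarrow> 0 \<le> prob n a b d E"
  unfolding prob_def expect_def by (intro sum_nonneg mult_nonneg_nonneg config_weight_nonneg) auto

lemma prob_disj_le:
  assumes "0 \<le> a" "0 \<le> b" "0 \<le> d"
  shows "prob n a b d (\<lambda>f. E f \<or> E' f) \<le> prob n a b d E + prob n a b d E'"
  unfolding prob_def expect_add[symmetric] using assms by (intro expect_mono) auto

lemma prob_independent:
  assumes "Y \<subseteq> offdiag n" "a + b + d = 1"
  shows "prob n a b d (\<lambda>f. \<forall>x\<in>Y. f x \<in> T x) = (\<Prod>x\<in>Y. \<Sum>s\<in>states \<inter> T x. state_weight a b d s)"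
proof -
  define T' where "T' x = (if x \<in> Y then T x else UNIV)" for x
  have "prob n a b d (\<lambda>f. \<forall>x\<in>Y. f x \<in> T x)
     = (\<Sum>f\<in>PiE (offdiag n) (\<lambda>_. states). (\<Prod>x\<in>offdiag n. state_weight a b d (f x)) *
           (if \<forall>x\<in>offdiag n. f x \<in> T' x then 1 else 0))"
    unfolding prob_def expect_def configs_def config_weight_def T'_def using assms(1)
    by (intro sum.cong refl arg_cong2[where f="(*)"]) auto
  also have "\<dots> = (\<Prod>x\<in>offdiag n. \<Sum>s\<in>states \<inter> T' x. state_weight a b d s)"
    by (rule sum_prod_PiE_indicator) (auto simp: states_def)
  also have "\<dots> = (\<Prod>x\<in>Y. \<Sum>s\<in>states \<inter> T x. state_weight a b d s) * (\<Prod>x\<in>offdiag n - Y. \<Sum>s\<in>states \<inter> T' x. state_weight a b d s)"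
    using assms(1) prod.subset_diff[of Y "offdiag n" "\<lambda>x. \<Sum>s\<in>states \<inter> T' x. state_weight a b d s"]
    by (simp add: T'_def mult.commute)
  also have "(\<Prod>x\<in>offdiag n - Y. \<Sum>s\<in>states \<inter> T' x. state_weight a b d s) = 1"
    using assms(2) by (intro prod.neutral) (auto simp: T'_def states_def state_weight_def)
  finally show ?thesis by simp
qed

lemma prob_True: "a + b + d = 1 \<Longrightarrow> prob n a b d (\<lambda>f. True) = 1"
  using prob_independent[of "{}" n a b d "\<lambda>_. UNIV"] by simp

lemma prob_not: "a + b + d = 1 \<Longrightarrow> prob n a b d (\<lambda>f. \<not> E f) = 1 - prob n a b d E"
proof -
  assume abd: "a + b + d = 1"
  have "prob n a b d (\<lambda>f. \<not> E f) + prob n a b d E = prob n a b d (\<lambda>f. True)"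
    unfolding prob_def expect_add[symmetric] by (rule arg_cong[where f="expect n a b d"]) auto
  then show ?thesis using prob_True[OF abd] by simp
qed

lemma markov_inequality:
  assumes "0 \<le> a" "0 \<le> b" "0 \<le> d" "t > 0" "\<And>f. f \<in> configs n \<Longrightarrow> 0 \<le> Z f"
  shows "prob n a b d (\<lambda>f. t \<le> Z f) \<le> expect n a b d Z / t"
proof -
  have "t * prob n a b d (\<lambda>f. t \<le> Z f) = expect n a b d (\<lambda>f. t * (if t \<le> Z f then 1 else 0))"
    unfolding prob_def expect_cmult ..
  also have "\<dots> \<le> expect n a b d Z"
    using assms by (intro expect_mono) auto
  finally show ?thesis using assms(4) by (simp add: field_simps mult.commute)
qed

lemma expect_card:
  "finite Y \<Longrightarrow> expect n a b d (\<lambda>f. real (card {y\<in>Y. R f y})) = (\<Sum>y\<in>Y. prob n a b d (\<lambda>f. R f y))"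
proof -
  assume fY: "finite Y"
  have "(\<lambda>f. real (card {y\<in>Y. R f y})) = (\<lambda>f. \<Sum>y\<in>Y. if R f y then 1 else 0)"
    using fY by (simp add: sum.inter_filter[symmetric])
  then show ?thesis unfolding prob_def using expect_sum[OF fY] by simp
qed

section \<open>Discarding the discovered ideas\<close>

lemma finite_outcomes[simp]: "finite (outcomes n)"
proof -
  have "outcomes n \<subseteq> Pow {..<n} \<times> Pow (offdiag n) \<times> Pow (offdiag n)"
    by (auto simp: outcomes_def)
  then show ?thesis by (rule finite_subset) auto
qed

lemma weight_nonneg:
  assumes "0 \<le> p" "p \<le> 1" "0 \<le> q" "q \<le> 1" "0 \<le> \<delta>" "\<delta> \<le> 1"
  shows "0 \<le> weight n p q \<delta> \<omega>"
proof -
  have "q * q \<le> 1" using assms by (simp add: mult_le_one)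
  then show ?thesis using assms unfolding weight_def iota_def
    by (auto split: prod.splits intro!: mult_nonneg_nonneg prod_nonneg)
qed

lemma prob_event_mono:
  assumes "0 \<le> p" "p \<le> 1" "0 \<le> q" "q \<le> 1" "0 \<le> \<delta>" "\<delta> \<le> 1"
    and "\<And>\<omega>. \<omega> \<in> outcomes n \<Longrightarrow> E \<omega> \<Longrightarrow> E' \<omega>"
  shows "prob_event n p q \<delta> E \<le> prob_event n p q \<delta> E'"
  unfolding prob_event_def using assms weight_nonneg[OF assms(1-6)]
  by (intro sum_mono2) auto

lemma prob_event_nonneg:
  "0 \<le> p \<Longrightarrow> p \<le> 1 \<Longrightarrow> 0 \<le> q \<Longrightarrow> q \<le> 1 \<Longrightarrow> 0 \<le> \<delta> \<Longrightarrow> \<delta> \<le> 1 \<Longrightarrow> 0 \<le> prob_event n p q \<delta> E"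
  unfolding prob_event_def by (intro sum_nonneg weight_nonneg)

lemma sum_idea_weights: "(\<Sum>I\<in>Pow {..<n::nat}. \<Prod>j<n. if j \<in> I then p else 1 - p) = (1::real)"
proof -
  have "(\<Sum>I\<in>Pow {..<n}. \<Prod>j<n. if j \<in> I then p else 1 - p)
      = (\<Sum>I\<in>Pow {..<n}. (\<Prod>j\<in>I. p) * (\<Prod>j\<in>{..<n} - I. 1 - p))"
  proof (rule sum.cong[OF refl])
    fix I assume "I \<in> Pow {..<n}"
    then have "{..<n} \<inter> {x. x \<in> I} = I" "{..<n} \<inter> - {x. x \<in> I} = {..<n} - I" by auto
    moreover have "(\<Prod>j<n. if j \<in> I then p else 1 - p) = prod (\<lambda>_. p) ({..<n} \<inter> {x. x \<in> I}) * prod (\<lambda>_. 1 - p) ({..<n} \<inter> - {x. x \<in> I})"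
      by (rule prod.If_cases) (rule finite_lessThan)
    ultimately show "(\<Prod>j<n. if j \<in> I then p else 1 - p) = (\<Prod>j\<in>I. p) * (\<Prod>j\<in>{..<n} - I. 1 - p)"
      by simp
  qed
  also have "\<dots> = (\<Prod>j<n. p + (1 - p))"
    by (rule prod_add[symmetric]) auto
  finally show ?thesis by simp
qed

lemma bij_betw_outcome_encoding:
  "bij_betw (\<lambda>(I, f). (I, direct n f, indirect n f)) (Pow {..<n} \<times> configs n) (outcomes n)"
proof (rule bij_betw_imageI)
  show "inj_on (\<lambda>(I, f). (I, direct n f, indirect n f)) (Pow {..<n} \<times> configs n)"
  proof (rule inj_onI)
    fix u v assume u: "u \<in> Pow {..<n} \<times> configs n" and v: "v \<in> Pow {..<n} \<times> configs n"
      and eq: "(case u of (I, f) \<Rightarrow> (I, direct n f, indirect n f)) = (case v of (I, f) \<Rightarrow> (I, direct n f, indirect n f))"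
    obtain I f I' g where uv: "u = (I, f)" "v = (I', g)" by (cases u, cases v)
    have fg: "f \<in> PiE (offdiag n) (\<lambda>_. states)" "g \<in> PiE (offdiag n) (\<lambda>_. states)"
      using u v uv by (auto simp: configs_def)
    have same: "I = I'" "direct n f = direct n g" "indirect n f = indirect n g" using eq uv by auto
    have "f = g"
    proof (rule PiE_ext[OF fg])
      fix x assume x: "x \<in> offdiag n"
      have "f x \<in> states" "g x \<in> states" using fg x by auto
      moreover have "f x = 2 \<longleftrightarrow> g x = 2" "f x \<noteq> 0 \<longleftrightarrow> g x \<noteq> 0"
        using same x unfolding direct_def indirect_def by blast+
      ultimately show "f x = g x" by (auto simp: states_def)
    qed
    then show "u = v" using same uv by simp
  qed
  show "(\<lambda>(I, f). (I, direct n f, indirect n f)) ` (Pow {..<n} \<times> configs n) = outcomes n"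
  proof
    show "(\<lambda>(I, f). (I, direct n f, indirect n f)) ` (Pow {..<n} \<times> configs n) \<subseteq> outcomes n"
      by (auto simp: outcomes_def direct_def indirect_def)
  next
    show "outcomes n \<subseteq> (\<lambda>(I, f). (I, direct n f, indirect n f)) ` (Pow {..<n} \<times> configs n)"
    proof
      fix \<omega> assume "\<omega> \<in> outcomes n"
      then obtain I D N where \<omega>: "\<omega> = (I, D, N)" "I \<subseteq> {..<n}" "D \<subseteq> offdiag n" "N \<subseteq> D"
        by (auto simp: outcomes_def)
      define f where "f = (\<lambda>x\<in>offdiag n. if x \<in> N then 2 else if x \<in> D then 1 else (0::nat))"
      have "f \<in> configs n" by (auto simp: f_def configs_def states_def)
      moreover have "direct n f = D" "indirect n f = N"
        using \<omega> by (auto simp: f_def direct_def indirect_def)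
      ultimately show "\<omega> \<in> (\<lambda>(I, f). (I, direct n f, indirect n f)) ` (Pow {..<n} \<times> configs n)"
        using \<omega> by force
    qed
  qed
qed

lemma weight_encoding:
  assumes "f \<in> configs n"
  shows "weight n p q \<delta> (I, direct n f, indirect n f)
       = (\<Prod>j<n. if j \<in> I then p else 1 - p) * config_weight n (q*q*\<delta>) (q*q*(1-\<delta>)) (1-q*q) f"
proof -
  have "state_weight (q*q*\<delta>) (q*q*(1-\<delta>)) (1-q*q) (f x)
      = (if x \<in> indirect n f then iota q q * \<delta> else if x \<in> direct n f then iota q q * (1 - \<delta>) else 1 - iota q q)"
    if "x \<in> offdiag n" for x
  proof -
    have "f x \<in> states" using assms that by (auto simp: configs_def)
    then have "f x = 0 \<or> f x = 1 \<or> f x = 2" by (auto simp: states_def)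
    then show ?thesis using that by (auto simp: indirect_def direct_def state_weight_def iota_def)
  qed
  then show ?thesis unfolding weight_def config_weight_def by simp
qed

lemma prob_event_eq_prob:
  "prob_event n p q \<delta> (\<lambda>\<omega>. E (fst (snd \<omega>)) (snd (snd \<omega>)))
     = prob n (q*q*\<delta>) (q*q*(1-\<delta>)) (1-q*q) (\<lambda>f. E (direct n f) (indirect n f))"
proof -
  define W where "W = config_weight n (q*q*\<delta>) (q*q*(1-\<delta>)) (1-q*q)"
  define wI where "wI I = (\<Prod>j<n. if j \<in> I then p else 1 - p)" for I :: "nat set"
  have "prob_event n p q \<delta> (\<lambda>\<omega>. E (fst (snd \<omega>)) (snd (snd \<omega>)))
      = (\<Sum>\<omega>\<in>outcomes n. if E (fst (snd \<omega>)) (snd (snd \<omega>)) then weight n p q \<delta> \<omega> else 0)"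
    by (simp add: prob_event_def sum.inter_filter)
  also have "\<dots> = (\<Sum>(I, f)\<in>Pow {..<n} \<times> configs n.
      if E (direct n f) (indirect n f) then weight n p q \<delta> (I, direct n f, indirect n f) else 0)"
    by (subst sum.reindex_bij_betw[OF bij_betw_outcome_encoding, symmetric]) (auto simp: split_def intro!: sum.cong)
  also have "\<dots> = (\<Sum>I\<in>Pow {..<n}. \<Sum>f\<in>configs n. wI I * (W f * (if E (direct n f) (indirect n f) then 1 else 0)))"
    by (auto simp: sum.cartesian_product weight_encoding W_def wI_def intro!: sum.cong)
  also have "\<dots> = (\<Sum>I\<in>Pow {..<n}. wI I) * prob n (q*q*\<delta>) (q*q*(1-\<delta>)) (1-q*q) (\<lambda>f. E (direct n f) (indirect n f))"
    by (simp add: sum_product prob_def expect_def W_def)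
  finally show ?thesis by (simp add: wI_def sum_idea_weights)
qed

section \<open>Ancestors in the indirect-learning network\<close>

definition ancestors :: "nat \<Rightarrow> (nat \<times> nat) set \<Rightarrow> nat set" where
  "ancestors i N = {m. m = i \<or> (m,i) \<in> (ind_net N)\<^sup>+}"

lemma ind_net_iff[simp]: "(a,b) \<in> ind_net N \<longleftrightarrow> (b,a) \<in> N"
  by (auto simp: ind_net_def)

lemma self_in_ancestors[simp]: "i \<in> ancestors i N" by (simp add: ancestors_def)

lemma ancestors_step:
  assumes "z \<in> ancestors i N" "(z, y) \<in> N"
  shows "y \<in> ancestors i N"
proof -
  have "(y, z) \<in> ind_net N" using assms(2) by simp
  then show ?thesis using assms(1) unfolding ancestors_def by (auto intro: trancl_into_trancl2)
qed

lemma ancestors_mono: "N \<subseteq> N' \<Longrightarrow> ancestors i N \<subseteq> ancestors i N'"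
proof -
  assume "N \<subseteq> N'"
  then have "ind_net N \<subseteq> ind_net N'" by (auto simp: ind_net_def)
  then show ?thesis unfolding ancestors_def using trancl_mono by blast
qed

lemma indirect_subset: "indirect n f \<subseteq> offdiag n" by (auto simp: indirect_def)

lemma ancestors_subset_snd: "ancestors i N \<subseteq> insert i (snd ` N)"
proof
  fix m assume "m \<in> ancestors i N"
  then have "m = i \<or> (m,i) \<in> (ind_net N)\<^sup>+" by (simp add: ancestors_def)
  then show "m \<in> insert i (snd ` N)"
  proof
    assume "(m,i) \<in> (ind_net N)\<^sup>+"
    then obtain z where "(m,z) \<in> ind_net N" by (meson tranclD)
    then show ?thesis by force
  qed simp
qed

lemma card_ancestors_le: "finite N \<Longrightarrow> card (ancestors i N) \<le> card N + 1"
proof -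
  assume f: "finite N"
  have "card (ancestors i N) \<le> card (insert i (snd ` N))"
    using ancestors_subset_snd f by (intro card_mono) auto
  also have "\<dots> \<le> card (snd ` N) + 1" using f by (simp add: card_insert_le_m1 card_insert_if)
  also have "\<dots> \<le> card N + 1" using f by (simp add: card_image_le)
  finally show ?thesis .
qed

lemma ancestors_subset_lessThan: "N \<subseteq> offdiag n \<Longrightarrow> i < n \<Longrightarrow> ancestors i N \<subseteq> {..<n}"
proof
  fix x assume "N \<subseteq> offdiag n" "i < n" "x \<in> ancestors i N"
  then show "x \<in> {..<n}" using ancestors_subset_snd[of i N] by (force simp: offdiag_def)
qed

lemma ancestors_restrict: "ancestors i (N \<inter> {x. fst x \<in> ancestors i N}) = ancestors i N"
proof
  show "ancestors i (N \<inter> {x. fst x \<in> ancestors i N}) \<subseteq> ancestors i N"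
    by (rule ancestors_mono) blast
next
  have "m \<in> ancestors i (N \<inter> {x. fst x \<in> ancestors i N})" if "(m, i) \<in> (ind_net N)\<^sup>+" for m
    using that
  proof (induction rule: converse_trancl_induct)
    case (base y)
    then show ?case using ancestors_step[of i i "N \<inter> {x. fst x \<in> ancestors i N}" y] by auto
  next
    case (step y z)
    then have "z \<in> ancestors i N" by (simp add: ancestors_def)
    with step show ?case using ancestors_step[of z i "N \<inter> {x. fst x \<in> ancestors i N}" y] by auto
  qed
  then show "ancestors i N \<subseteq> ancestors i (N \<inter> {x. fst x \<in> ancestors i N})"
    by (auto simp: ancestors_def)
qed

lemma ancestors_eq_if_local:
  assumes local: "ancestors i (N \<inter> {x. fst x \<in> S}) = S"
  shows "ancestors i N = S"
proof
  show "S \<subseteq> ancestors i N" using ancestors_mono[of "N \<inter> {x. fst x \<in> S}" N i] local by blast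
next
  have i: "i \<in> S" using local self_in_ancestors by blast
  have "y \<in> S" if "(y, i) \<in> (ind_net N)\<^sup>+" for y
    using that
  proof (induction rule: converse_trancl_induct)
    case (base y)
    then show ?case using ancestors_step[of i i "N \<inter> {x. fst x \<in> S}" y] i local by auto
  next
    case (step y z)
    then show ?case using ancestors_step[of z i "N \<inter> {x. fst x \<in> S}" y] local by auto
  qed
  then show "ancestors i N \<subseteq> S" using i by (auto simp: ancestors_def)
qed

lemma ancestors_eq_iff_local: "ancestors i N = S \<longleftrightarrow> ancestors i (N \<inter> {x. fst x \<in> S}) = S"
  using ancestors_restrict ancestors_eq_if_local by blast

section \<open>Paths in the indirect-learning network\<close>

text \<open>A list \<open>xs\<close> with \<open>path_edges xs \<subseteq> N\<close> is a path from \<open>hd xs\<close> to \<open>last xs\<close> in the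
  indirect-learning network; its edges are stored as in \<open>N\<close>, as (learner, source) pairs.\<close>

definition path_edges :: "nat list \<Rightarrow> (nat \<times> nat) set" where
  "path_edges xs = set (zip (tl xs) xs)"

lemma path_edges_simps[simp]:
  "path_edges [] = {}" "path_edges [x] = {}" "path_edges (x#y#ys) = insert (y,x) (path_edges (y#ys))"
  by (auto simp: path_edges_def)

lemma path_edges_append: "path_edges vs \<subseteq> path_edges (us @ vs)"
proof (induction us)
  case Nil then show ?case by simp
next
  case (Cons u us)
  then show ?case by (cases "us @ vs") auto
qed

lemma path_edges_memD: "(u,v) \<in> path_edges xs \<Longrightarrow> u \<in> set (tl xs) \<and> v \<in> set xs \<and> u \<in> set xs"
  unfolding path_edges_def by (cases xs) (auto dest: set_zip_leftD set_zip_rightD)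

lemma card_path_edges: "distinct xs \<Longrightarrow> card (path_edges xs) = length xs - 1"
  unfolding path_edges_def by (subst distinct_card) (auto intro: distinct_zipI1 distinct_tl)

lemma path_edges_subset_offdiag: "distinct xs \<Longrightarrow> set xs \<subseteq> {..<n} \<Longrightarrow> path_edges xs \<subseteq> offdiag n"
proof (induction xs rule: induct_list012)
  case (3 x y ys) then show ?case by (auto simp: offdiag_def)
qed auto

lemma hd_notin_path_edges: "distinct xs \<Longrightarrow> (hd xs, j) \<notin> path_edges xs"
  by (cases xs) (auto dest: path_edges_memD)

lemma path_subset_ancestors:
  "path_edges xs \<subseteq> N \<Longrightarrow> xs \<noteq> [] \<Longrightarrow> last xs = i \<Longrightarrow> set xs \<subseteq> ancestors i N"
proof (induction xs rule: induct_list012)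
  case (3 x y ys)
  then show ?case using ancestors_step[of y i N x] by auto
qed auto

lemma trancl_distinct_path:
  assumes "(m,i) \<in> (ind_net N)\<^sup>+"
  shows "\<exists>xs. distinct xs \<and> xs \<noteq> [] \<and> hd xs = m \<and> last xs = i \<and> path_edges xs \<subseteq> N"
  using assms
proof (induction rule: converse_trancl_induct)
  case (base y)
  show ?case
  proof (cases "y = i")
    case True then show ?thesis by (intro exI[of _ "[i]"]) auto
  next
    case False then show ?thesis using base by (intro exI[of _ "[y,i]"]) auto
  qed
next
  case (step y z)
  then obtain xs where xs: "distinct xs" "xs \<noteq> []" "hd xs = z" "last xs = i" "path_edges xs \<subseteq> N" by blast
  show ?case
  proof (cases "y \<in> set xs")
    case True
    then obtain us vs where uv: "xs = us @ y # vs" by (meson split_list)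
    have "path_edges (y#vs) \<subseteq> N" using path_edges_append[of "y#vs" us] xs(5) uv by auto
    moreover have "distinct (y#vs)" using xs(1) uv by auto
    moreover have "last (y#vs) = i" using xs(4) uv by simp
    ultimately show ?thesis by (intro exI[of _ "y#vs"]) auto
  next
    case False
    obtain w ws where xw: "xs = w # ws" using xs(2) by (cases xs) auto
    have "path_edges (y#xs) \<subseteq> N" using xs step(1) xw by auto
    then show ?thesis using False xs xw by (intro exI[of _ "y#xs"]) auto
  qed
qed

lemma ancestor_distinct_path:
  assumes "m \<in> ancestors i N"
  shows "\<exists>xs. distinct xs \<and> xs \<noteq> [] \<and> hd xs = m \<and> last xs = i \<and> path_edges xs \<subseteq> N"
proof (cases "m = i")
  case True then show ?thesis by (intro exI[of _ "[i]"]) auto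
next
  case False then show ?thesis using assms trancl_distinct_path unfolding ancestors_def by auto
qed

definition paths :: "nat \<Rightarrow> nat \<Rightarrow> nat \<Rightarrow> nat list set" where
  "paths n i L = {xs. distinct xs \<and> set xs \<subseteq> {..<n} \<and> xs \<noteq> [] \<and> last xs = i \<and> length xs \<le> L}"

lemma finite_paths[simp]: "finite (paths n i L)"
proof -
  have "paths n i L \<subseteq> {xs. set xs \<subseteq> {..<n} \<and> length xs \<le> L}" by (auto simp: paths_def)
  then show ?thesis by (rule finite_subset) (rule finite_lists_length_le, simp)
qed

lemma card_ancestors_le_paths:
  assumes "i < n"
  shows "card (ancestors i (indirect n f)) \<le> card {xs\<in>paths n i n. path_edges xs \<subseteq> indirect n f}"
proof -
  have sub: "ancestors i (indirect n f) \<subseteq> hd ` {xs\<in>paths n i n. path_edges xs \<subseteq> indirect n f}"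
  proof
    fix m assume m: "m \<in> ancestors i (indirect n f)"
    obtain xs where xs: "distinct xs" "xs \<noteq> []" "hd xs = m" "last xs = i" "path_edges xs \<subseteq> indirect n f"
      using ancestor_distinct_path[OF m] by blast
    have "set xs \<subseteq> {..<n}" using path_subset_ancestors[OF xs(5,2,4)] ancestors_subset_lessThan[OF indirect_subset assms] by blast
    moreover then have "length xs \<le> n" using xs(1) distinct_card[OF xs(1)] card_mono[of "{..<n}" "set xs"] by simp
    ultimately have "xs \<in> {xs\<in>paths n i n. path_edges xs \<subseteq> indirect n f}" using xs by (simp add: paths_def)
    then show "m \<in> hd ` {xs\<in>paths n i n. path_edges xs \<subseteq> indirect n f}" using xs(3) by blast
  qed
  have "card (ancestors i (indirect n f)) \<le> card (hd ` {xs\<in>paths n i n. path_edges xs \<subseteq> indirect n f})"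
    using sub by (intro card_mono) auto
  also have "\<dots> \<le> card {xs\<in>paths n i n. path_edges xs \<subseteq> indirect n f}" by (intro card_image_le) auto
  finally show ?thesis .
qed

lemma sum_lists_length_le:
  fixes z :: real
  shows "(\<Sum>ys\<in>{ys. set ys \<subseteq> {..<n} \<and> length ys \<le> L}. z ^ length ys) = (\<Sum>l\<le>L. (real n * z) ^ l)"
proof -
  let ?Lst = "{ys. set ys \<subseteq> {..<n} \<and> length ys \<le> L}"
  have fin: "finite ?Lst" by (rule finite_lists_length_le) simp
  have "(\<Sum>ys\<in>?Lst. z ^ length ys) = (\<Sum>l\<in>{..L}. \<Sum>ys\<in>{ys. ys \<in> ?Lst \<and> length ys = l}. z ^ length ys)"
    by (rule sum.group[symmetric, OF fin]) auto
  also have "\<dots> = (\<Sum>l\<le>L. (real n * z) ^ l)"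
  proof (rule sum.cong[OF refl])
    fix l assume l: "l \<in> {..L}"
    have "{ys. ys \<in> ?Lst \<and> length ys = l} = {ys. set ys \<subseteq> {..<n} \<and> length ys = l}" using l by auto
    then have "(\<Sum>ys\<in>{ys. ys \<in> ?Lst \<and> length ys = l}. z ^ length ys)
        = real (card {ys. set ys \<subseteq> {..<n} \<and> length ys = l}) * z ^ l" by simp
    also have "\<dots> = (real n * z) ^ l" by (simp add: card_lists_length_eq power_mult_distrib)
    finally show "(\<Sum>ys\<in>{ys. ys \<in> ?Lst \<and> length ys = l}. z ^ length ys) = (real n * z) ^ l" .
  qed
  finally show ?thesis .
qed

lemma sum_paths_le:
  fixes z :: real
  assumes "0 \<le> z"
  shows "(\<Sum>xs\<in>paths n i L. z ^ (length xs - 1)) \<le> (\<Sum>l\<le>L. (real n * z) ^ l)"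
proof -
  have inj: "inj_on butlast (paths n i L)"
  proof (rule inj_onI)
    fix xs ys
    assume xy: "xs \<in> paths n i L" "ys \<in> paths n i L" "butlast xs = butlast ys"
    then have "xs \<noteq> []" "ys \<noteq> []" "last xs = last ys" by (auto simp: paths_def)
    then show "xs = ys" using xy(3) by (metis append_butlast_last_id)
  qed
  have sub: "butlast ` paths n i L \<subseteq> {ys. set ys \<subseteq> {..<n} \<and> length ys \<le> L}"
    by (auto simp: paths_def dest: in_set_butlastD)
  have "(\<Sum>xs\<in>paths n i L. z ^ (length xs - 1)) = (\<Sum>ys\<in>butlast ` paths n i L. z ^ length ys)"
    by (subst sum.reindex[OF inj]) auto
  also have "\<dots> \<le> (\<Sum>ys\<in>{ys. set ys \<subseteq> {..<n} \<and> length ys \<le> L}. z ^ length ys)"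
    using assms sub by (intro sum_mono2) (auto intro: finite_lists_length_le)
  also have "\<dots> = (\<Sum>l\<le>L. (real n * z) ^ l)" by (rule sum_lists_length_le)
  finally show ?thesis .
qed

lemma prob_path:
  assumes "xs \<in> paths n i L" "a + b + d = 1"
  shows "prob n a b d (\<lambda>f. path_edges xs \<subseteq> indirect n f) = a ^ (length xs - 1)"
proof -
  have xs: "distinct xs" "set xs \<subseteq> {..<n}" using assms by (auto simp: paths_def)
  have sub: "path_edges xs \<subseteq> offdiag n" using path_edges_subset_offdiag[OF xs] .
  have "prob n a b d (\<lambda>f. path_edges xs \<subseteq> indirect n f) = prob n a b d (\<lambda>f. \<forall>x\<in>path_edges xs. f x \<in> {2})"
  proof (rule prob_cong)
    fix f show "(path_edges xs \<subseteq> indirect n f) = (\<forall>x\<in>path_edges xs. f x \<in> {2})"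
      using sub unfolding indirect_def by blast
  qed
  also have "\<dots> = (\<Prod>x\<in>path_edges xs. \<Sum>s\<in>states \<inter> {2}. state_weight a b d s)"
    by (rule prob_independent[OF sub assms(2)])
  also have "\<dots> = a ^ (length xs - 1)"
    using card_path_edges[OF xs(1)] by (simp add: states_def state_weight_def)
  finally show ?thesis .
qed

lemma prob_path_direct_le:
  assumes "xs \<in> paths n i L" "a + b + d = 1" "0 \<le> a" "0 \<le> b" "0 \<le> d"
  shows "prob n a b d (\<lambda>f. path_edges xs \<subseteq> indirect n f \<and> (hd xs, j) \<in> direct n f) \<le> a ^ (length xs - 1) * (a + b)"
proof -
  have xs: "distinct xs" "set xs \<subseteq> {..<n}" using assms by (auto simp: paths_def)
  have sub: "path_edges xs \<subseteq> offdiag n" using path_edges_subset_offdiag[OF xs] .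
  have nin: "(hd xs, j) \<notin> path_edges xs" by (rule hd_notin_path_edges[OF xs(1)])
  show ?thesis
  proof (cases "(hd xs, j) \<in> offdiag n")
    case False
    then have "prob n a b d (\<lambda>f. path_edges xs \<subseteq> indirect n f \<and> (hd xs, j) \<in> direct n f)
        = prob n a b d (\<lambda>f. False)"
      by (intro prob_cong) (auto simp: direct_def)
    then show ?thesis using assms(3,4) by (simp add: prob_def expect_def)
  next
    case True
    define Y where "Y = insert (hd xs, j) (path_edges xs)"
    define T where "T x = (if x = (hd xs, j) then {1,2} else {2::nat})" for x
    have Ysub: "Y \<subseteq> offdiag n" using True sub by (auto simp: Y_def)
    have "prob n a b d (\<lambda>f. path_edges xs \<subseteq> indirect n f \<and> (hd xs, j) \<in> direct n f) = prob n a b d (\<lambda>f. \<forall>x\<in>Y. f x \<in> T x)"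
    proof (rule prob_cong)
      fix f assume f: "f \<in> configs n"
      have v: "f (hd xs, j) \<in> states" using f True by (auto simp: configs_def)
      show "(path_edges xs \<subseteq> indirect n f \<and> (hd xs, j) \<in> direct n f) = (\<forall>x\<in>Y. f x \<in> T x)"
      proof -
        have "(path_edges xs \<subseteq> indirect n f) = (\<forall>x\<in>path_edges xs. f x \<in> T x)"
          using sub nin unfolding indirect_def T_def by auto
        moreover have "((hd xs, j) \<in> direct n f) = (f (hd xs, j) \<in> T (hd xs, j))"
          using True v unfolding direct_def T_def states_def by auto
        ultimately show ?thesis unfolding Y_def by auto
      qed
    qed
    also have "\<dots> = (\<Prod>x\<in>Y. \<Sum>s\<in>states \<inter> T x. state_weight a b d s)"
      by (rule prob_independent[OF Ysub assms(2)])
    also have "\<dots> = (a + b) * (\<Prod>x\<in>path_edges xs. \<Sum>s\<in>states \<inter> T x. state_weight a b d s)"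
      unfolding Y_def using nin by (subst prod.insert) (auto simp: T_def states_def state_weight_def path_edges_def)
    also have "(\<Prod>x\<in>path_edges xs. \<Sum>s\<in>states \<inter> T x. state_weight a b d s) = (\<Prod>x\<in>path_edges xs. a)"
      using nin by (intro prod.cong refl) (auto simp: T_def states_def state_weight_def)
    also have "\<dots> = a ^ (length xs - 1)" using card_path_edges[OF xs(1)] by simp
    finally show ?thesis by (simp add: mult.commute)
  qed
qed

section \<open>Tail of the number of ancestors\<close>

lemma prob_many_ancestors_subcritical:
  assumes i: "i < n" and a': "0 \<le> a'" "real n * a' < 1" and K: "0 < K"
  shows "prob n a' 0 (1 - a') (\<lambda>f. K \<le> card (ancestors i (indirect n f))) \<le> 1 / ((1 - real n * a') * real K)"
proof -
  define Z where "Z f = real (card {xs\<in>paths n i n. path_edges xs \<subseteq> indirect n f})" for f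
  have "a' \<le> real n * a'" using i a'(1) mult_right_mono[of 1 "real n" a'] by simp
  then have a'1: "a' \<le> 1" using a'(2) by linarith
  have "prob n a' 0 (1 - a') (\<lambda>f. K \<le> card (ancestors i (indirect n f))) \<le> prob n a' 0 (1 - a') (\<lambda>f. real K \<le> Z f)"
    using a' a'1 card_ancestors_le_paths[OF i] unfolding Z_def by (intro prob_mono) (auto intro: order_trans)
  also have "\<dots> \<le> expect n a' 0 (1 - a') Z / real K"
    using a' a'1 K by (intro markov_inequality) (auto simp: Z_def)
  also have "expect n a' 0 (1 - a') Z = (\<Sum>xs\<in>paths n i n. prob n a' 0 (1 - a') (\<lambda>f. path_edges xs \<subseteq> indirect n f))"
    unfolding Z_def by (rule expect_card) simp
  also have "\<dots> = (\<Sum>xs\<in>paths n i n. a' ^ (length xs - 1))"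
    by (intro sum.cong refl prob_path) auto
  also have "\<dots> \<le> (\<Sum>l<Suc n. (real n * a') ^ l)"
    using sum_paths_le[of a' n i n] a' by (simp add: lessThan_Suc_atMost)
  also have "\<dots> = (1 - (real n * a') ^ Suc n) / (1 - real n * a')"
    using a' by (subst sum_gp_strict) simp
  also have "\<dots> \<le> 1 / (1 - real n * a')"
    using a' by (intro divide_right_mono) auto
  finally show ?thesis using K by (simp add: divide_right_mono field_simps)
qed

text \<open>The event that the ancestor set of \<open>i\<close> is \<open>S\<close> only involves the edges whose learner
  lies in \<open>S\<close> (\<open>ancestors_eq_iff_local\<close>); \<open>ancestors_prob n i S r\<close> is its
  probability when each of these edges is present with probability \<open>r\<close>.\<close>

definition local_configs :: "nat \<Rightarrow> nat set \<Rightarrow> (nat \<times> nat \<Rightarrow> bool) set" where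
  "local_configs n S = PiE (offdiag n) (\<lambda>x. if fst x \<in> S then UNIV else {False})"

definition local_weight :: "nat set \<Rightarrow> real \<Rightarrow> nat \<times> nat \<Rightarrow> bool \<Rightarrow> real" where
  "local_weight S r x t = (if fst x \<in> S then (if t then r else 1 - r) else (if t then 0 else 1))"

definition ancestors_prob :: "nat \<Rightarrow> nat \<Rightarrow> nat set \<Rightarrow> real \<Rightarrow> real" where
  "ancestors_prob n i S r = (\<Sum>g\<in>local_configs n S. (\<Prod>x\<in>offdiag n. local_weight S r x (g x)) *
                   (if ancestors i {x\<in>offdiag n. g x} = S then 1 else 0))"

lemma prob_ancestors_eq:
  assumes "a + b + d = 1"
  shows "prob n a b d (\<lambda>f. ancestors i (indirect n f) = S) = ancestors_prob n i S a"
proof -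
  define X where "X = offdiag n"
  define h where "h x s = (fst x \<in> S \<and> s = (2::nat))" for x :: "nat \<times> nat" and s
  define F where "F g = (if ancestors i {x\<in>X. g x} = S then 1 else (0::real))" for g
  have ev: "(if ancestors i (indirect n f) = S then 1 else 0) = F (\<lambda>x\<in>X. h x (f x))" for f
  proof -
    have "{x\<in>X. (\<lambda>x\<in>X. h x (f x)) x} = indirect n f \<inter> {x. fst x \<in> S}"
      by (auto simp: X_def h_def indirect_def)
    then show ?thesis unfolding F_def using ancestors_eq_iff_local[of i "indirect n f" S] by simp
  qed
  have "prob n a b d (\<lambda>f. ancestors i (indirect n f) = S)
      = (\<Sum>f\<in>PiE X (\<lambda>_. states). (\<Prod>x\<in>X. state_weight a b d (f x)) * F (\<lambda>x\<in>X. h x (f x)))"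
    unfolding prob_def expect_def configs_def config_weight_def X_def[symmetric] ev ..
  also have "\<dots> = (\<Sum>g\<in>PiE X (\<lambda>x. h x ` states). (\<Prod>x\<in>X. \<Sum>s\<in>{s\<in>states. h x s = g x}. state_weight a b d s) * F g)"
    by (rule sum_prod_PiE_pushforward) (auto simp: X_def states_def)
  also have "\<dots> = ancestors_prob n i S a"
    unfolding ancestors_prob_def local_configs_def X_def[symmetric] F_def
  proof (rule sum.cong)
    show "PiE X (\<lambda>x. h x ` states) = PiE X (\<lambda>x. if fst x \<in> S then UNIV else {False})"
      by (rule PiE_cong) (auto simp: h_def states_def image_iff)
  next
    fix g assume "g \<in> PiE X (\<lambda>x. if fst x \<in> S then UNIV else {False})"
    have "(\<Sum>s\<in>{s\<in>states. h x s = t}. state_weight a b d s) = local_weight S a x t" for x t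
    proof -
      have "{s\<in>states. h x s = t} = (if fst x \<in> S then (if t then {2} else {0,1}) else (if t then {} else states))"
        by (auto simp: states_def h_def)
      then show ?thesis using assms by (simp add: local_weight_def states_def state_weight_def)
    qed
    then show "(\<Prod>x\<in>X. \<Sum>s\<in>{s\<in>states. h x s = g x}. state_weight a b d s) * (if ancestors i {x\<in>X. g x} = S then 1 else 0)
        = (\<Prod>x\<in>X. local_weight S a x (g x)) * (if ancestors i {x\<in>X. g x} = S then 1 else 0)" by simp
  qed
  finally show ?thesis .
qed

lemma prod_local_weight:
  assumes g: "g \<in> local_configs n S"
  shows "(\<Prod>x\<in>offdiag n. local_weight S r x (g x))
       = r ^ card {x\<in>offdiag n. g x} * (1 - r) ^ card ({x\<in>offdiag n. fst x \<in> S} - {x\<in>offdiag n. g x})"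
proof -
  define X where "X = offdiag n"
  define C where "C = {x\<in>X. fst x \<in> S}"
  define T where "T = {x\<in>X. g x}"
  have TC: "T \<subseteq> C" using g by (auto simp: T_def C_def local_configs_def X_def PiE_iff split: if_splits)
  have CX: "C \<subseteq> X" by (auto simp: C_def)
  have fX: "finite X" by (simp add: X_def)
  have fC: "finite C" using CX fX finite_subset by blast
  have "(\<Prod>x\<in>X. local_weight S r x (g x)) = (\<Prod>x\<in>C. local_weight S r x (g x)) * (\<Prod>x\<in>X - C. local_weight S r x (g x))"
    using prod.subset_diff[OF CX fX] by (simp add: mult.commute)
  also have "(\<Prod>x\<in>X - C. local_weight S r x (g x)) = 1"
    using TC by (intro prod.neutral) (auto simp: local_weight_def C_def T_def)
  also have "(\<Prod>x\<in>C. local_weight S r x (g x)) = (\<Prod>x\<in>T. local_weight S r x (g x)) * (\<Prod>x\<in>C - T. local_weight S r x (g x))"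
    using prod.subset_diff[OF TC fC] by (simp add: mult.commute)
  also have "(\<Prod>x\<in>T. local_weight S r x (g x)) = (\<Prod>x\<in>T. r)"
    using TC by (intro prod.cong refl) (auto simp: local_weight_def C_def T_def)
  also have "(\<Prod>x\<in>C - T. local_weight S r x (g x)) = (\<Prod>x\<in>C - T. 1 - r)"
    by (intro prod.cong refl) (auto simp: local_weight_def C_def T_def)
  finally show ?thesis by (simp add: X_def C_def T_def)
qed

lemma ancestors_prob_nonneg: "0 \<le> r \<Longrightarrow> r \<le> 1 \<Longrightarrow> 0 \<le> ancestors_prob n i S r"
  unfolding ancestors_prob_def local_weight_def by (intro sum_nonneg mult_nonneg_nonneg prod_nonneg) auto

lemma ancestors_prob_eq_0: "i \<notin> S \<Longrightarrow> ancestors_prob n i S r = 0"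
  unfolding ancestors_prob_def by (intro sum.neutral) (auto simp: ancestors_def)

lemma power_weight_compare:
  fixes a a' :: real
  assumes a: "0 < a'" "a' \<le> a" "a < 1" and "k \<le> m" "M \<le> N"
  shows "(a / a') ^ k * ((1 - a) / (1 - a')) ^ N * (a' ^ m * (1 - a') ^ M) \<le> a ^ m * (1 - a) ^ M"
proof -
  have "(a / a') ^ k * a' ^ m \<le> (a / a') ^ m * a' ^ m"
    using assms by (intro mult_right_mono power_increasing) auto
  also have "\<dots> = a ^ m" using a by (simp add: power_divide)
  finally have "(a / a') ^ k * a' ^ m \<le> a ^ m" .
  moreover have "((1 - a) / (1 - a')) ^ N * (1 - a') ^ M \<le> ((1 - a) / (1 - a')) ^ M * (1 - a') ^ M"
    using assms by (intro mult_right_mono power_decreasing) auto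
  moreover have "((1 - a) / (1 - a')) ^ M * (1 - a') ^ M = (1 - a) ^ M" using a by (simp add: power_divide)
  ultimately have "((a / a') ^ k * a' ^ m) * (((1 - a) / (1 - a')) ^ N * (1 - a') ^ M) \<le> a ^ m * (1 - a) ^ M"
    using a by (intro mult_mono) auto
  then show ?thesis by (simp add: mult_ac)
qed

lemma ancestors_prob_compare:
  assumes a: "0 < a'" "a' \<le> a" "a < 1" and S: "S \<subseteq> {..<n}"
  shows "(a / a') ^ (card S - 1) * ((1 - a) / (1 - a')) ^ (card S * n) * ancestors_prob n i S a'
       \<le> ancestors_prob n i S a"
  unfolding ancestors_prob_def sum_distrib_left
proof (rule sum_mono)
  fix g assume g: "g \<in> local_configs n S"
  define T C where "T = {x\<in>offdiag n. g x}" and "C = {x\<in>offdiag n. fst x \<in> S}"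
  have "C \<subseteq> S \<times> {..<n}" by (auto simp: C_def offdiag_def)
  then have "card (C - T) \<le> card (S \<times> {..<n})"
    using finite_subset[OF S] by (intro card_mono) auto
  then have C_T: "card (C - T) \<le> card S * n" by (simp add: card_cartesian_product)
  show "(a / a') ^ (card S - 1) * ((1 - a) / (1 - a')) ^ (card S * n) *
        ((\<Prod>x\<in>offdiag n. local_weight S a' x (g x)) * (if ancestors i {x\<in>offdiag n. g x} = S then 1 else 0))
      \<le> (\<Prod>x\<in>offdiag n. local_weight S a x (g x)) * (if ancestors i {x\<in>offdiag n. g x} = S then 1 else 0)"
  proof (cases "ancestors i T = S")
    case True
    then have "card S - 1 \<le> card T" using card_ancestors_le[of T i] by (simp add: T_def)
    then show ?thesis
      using True prod_local_weight[OF g, of a'] prod_local_weight[OF g, of a]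
        power_weight_compare[OF a _ C_T] by (simp add: T_def C_def)
  qed (simp add: T_def)
qed

definition small_sets :: "nat \<Rightarrow> nat \<Rightarrow> nat set set" where
  "small_sets n K = {S. S \<subseteq> {..<n} \<and> card S < K}"

lemma finite_small_sets: "finite (small_sets n K)"
  by (rule finite_subset[of _ "Pow {..<n}"]) (auto simp: small_sets_def)

lemma prob_card_ancestors_less:
  assumes "i < n"
  shows "prob n a b d (\<lambda>f. card (ancestors i (indirect n f)) < K) = (\<Sum>S\<in>small_sets n K. prob n a b d (\<lambda>f. ancestors i (indirect n f) = S))"
proof -
  have "(\<Sum>S\<in>small_sets n K. prob n a b d (\<lambda>f. ancestors i (indirect n f) = S))
      = expect n a b d (\<lambda>f. \<Sum>S\<in>small_sets n K. if ancestors i (indirect n f) = S then 1 else 0)"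
    unfolding prob_def by (rule expect_sum[OF finite_small_sets, symmetric])
  also have "\<dots> = prob n a b d (\<lambda>f. card (ancestors i (indirect n f)) < K)"
    unfolding prob_def
  proof (rule expect_cong)
    fix f
    have "ancestors i (indirect n f) \<subseteq> {..<n}" using ancestors_subset_lessThan[OF indirect_subset assms] .
    then have "(ancestors i (indirect n f) \<in> small_sets n K) = (card (ancestors i (indirect n f)) < K)" by (simp add: small_sets_def)
    then show "(\<Sum>S\<in>small_sets n K. if ancestors i (indirect n f) = S then 1 else 0) = (if card (ancestors i (indirect n f)) < K then 1 else (0::real))"
      using finite_small_sets by (simp add: sum.delta)
  qed
  finally show ?thesis ..
qed

lemma prob_card_ancestors_less_compare:
  assumes i: "i < n" and r: "0 < a'" "a' \<le> a" "a < 1" and abd: "a + b + d = 1"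
    and mu: "0 \<le> \<mu>" "\<And>k. 1 \<le> k \<Longrightarrow> k < K \<Longrightarrow> \<mu> \<le> (a / a') ^ (k - 1) * ((1 - a) / (1 - a')) ^ (k * n)"
  shows "\<mu> * prob n a' 0 (1 - a') (\<lambda>f. card (ancestors i (indirect n f)) < K) \<le> prob n a b d (\<lambda>f. card (ancestors i (indirect n f)) < K)"
proof -
  have "\<mu> * prob n a' 0 (1 - a') (\<lambda>f. card (ancestors i (indirect n f)) < K) = (\<Sum>S\<in>small_sets n K. \<mu> * ancestors_prob n i S a')"
    unfolding prob_card_ancestors_less[OF i] by (simp add: prob_ancestors_eq sum_distrib_left)
  also have "\<dots> \<le> (\<Sum>S\<in>small_sets n K. ancestors_prob n i S a)"
  proof (rule sum_mono)
    fix S assume S: "S \<in> small_sets n K"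
    show "\<mu> * ancestors_prob n i S a' \<le> ancestors_prob n i S a"
    proof (cases "i \<in> S")
      case False then show ?thesis by (simp add: ancestors_prob_eq_0)
    next
      case True
      have fS: "finite S" using S finite_subset by (auto simp: small_sets_def)
      then have k1: "1 \<le> card S" using True by (metis One_nat_def Suc_leI card_gt_0_iff empty_iff)
      have kK: "card S < K" using S by (simp add: small_sets_def)
      have "\<mu> * ancestors_prob n i S a' \<le> ((a / a') ^ (card S - 1) * ((1 - a) / (1 - a')) ^ (card S * n)) * ancestors_prob n i S a'"
        using mu(2)[OF k1 kK] ancestors_prob_nonneg[of a'] r by (intro mult_right_mono) auto
      also have "\<dots> \<le> ancestors_prob n i S a" using ancestors_prob_compare[OF r] S by (simp add: small_sets_def)
      finally show ?thesis .
    qed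
  qed
  also have "\<dots> = prob n a b d (\<lambda>f. card (ancestors i (indirect n f)) < K)"
    unfolding prob_card_ancestors_less[OF i] using abd by (simp add: prob_ancestors_eq)
  finally show ?thesis .
qed

text \<open>At criticality the expected number of indirect-learning paths into a firm is unbounded,
  so Markov's inequality is applied at the subcritical edge probability \<open>a'\<close> instead, and
  the result transferred at the cost of the factor \<open>\<mu>\<close>.\<close>

lemma prob_many_ancestors_le:
  assumes i: "i < n" and a: "0 < a'" "a' \<le> a" "a < 1" "real n * a' < 1"
    and abd: "a + b + d = 1" and K: "0 < K" and \<mu>: "0 \<le> \<mu>" "\<mu> \<le> 1"
    and ratio: "\<And>k. 1 \<le> k \<Longrightarrow> k < K \<Longrightarrow> \<mu> \<le> (a / a') ^ (k - 1) * ((1 - a) / (1 - a')) ^ (k * n)"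
  shows "prob n a b d (\<lambda>f. K \<le> card (ancestors i (indirect n f))) \<le> 1 - \<mu> + 1 / ((1 - real n * a') * real K)"
proof -
  let ?small = "\<lambda>f. card (ancestors i (indirect n f)) < K"
  let ?large = "\<lambda>f. K \<le> card (ancestors i (indirect n f))"
  have compl: "prob n x y z ?large = 1 - prob n x y z ?small" if "x + y + z = 1" for x y z
    using prob_not[OF that, where E = ?small] by (simp add: not_less)
  let ?P' = "prob n a' 0 (1 - a') ?large"
  have P': "0 \<le> ?P'" "?P' \<le> 1 / ((1 - real n * a') * real K)"
    using a by (auto intro: prob_nonneg prob_many_ancestors_subcritical[OF i _ _ K])
  have "prob n a b d ?large = 1 - prob n a b d ?small" by (rule compl[OF abd])
  also have "\<dots> \<le> 1 - \<mu> * prob n a' 0 (1 - a') ?small"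
    using prob_card_ancestors_less_compare[OF i a(1-3) abd \<mu>(1) ratio] by simp
  also have "prob n a' 0 (1 - a') ?small = 1 - ?P'" using compl[of a' 0 "1 - a'"] by simp
  also have "1 - \<mu> * (1 - ?P') = 1 - \<mu> + \<mu> * ?P'" by (simp add: algebra_simps)
  also have "\<dots> \<le> 1 - \<mu> + ?P'" using P'(1) \<mu> by (simp add: mult_left_le_one_le)
  finally show ?thesis using P'(2) by linarith
qed

section \<open>Tail of the number of learned ideas\<close>

definition reach_count :: "nat \<Rightarrow> nat \<Rightarrow> nat \<Rightarrow> (nat \<times> nat) set \<Rightarrow> (nat \<times> nat) set \<Rightarrow> nat" where
  "reach_count n i K D N = card {y\<in>paths n i K \<times> {..<n}. path_edges (fst y) \<subseteq> N \<and> (hd (fst y), snd y) \<in> D}"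

lemma card_learned_le_reach_count:
  assumes i: "i < n" and DN: "D \<subseteq> offdiag n" "N \<subseteq> offdiag n" and K: "card (ancestors i N) < K"
  shows "card (learned i (I, D, N)) \<le> reach_count n i K D N"
proof -
  define Y where "Y = {y\<in>paths n i K \<times> {..<n}. path_edges (fst y) \<subseteq> N \<and> (hd (fst y), snd y) \<in> D}"
  have fY: "finite Y" unfolding Y_def by (rule finite_subset[of _ "paths n i K \<times> {..<n}"]) auto
  have sub: "learned i (I, D, N) \<subseteq> snd ` Y"
  proof
    fix j assume "j \<in> learned i (I, D, N)"
    then obtain m where m: "m = i \<or> (m,i) \<in> (ind_net N)\<^sup>+" "(m,j) \<in> D"
      by (auto simp: learned_def)
    have ma: "m \<in> ancestors i N" using m(1) by (simp add: ancestors_def)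
    obtain xs where xs: "distinct xs" "xs \<noteq> []" "hd xs = m" "last xs = i" "path_edges xs \<subseteq> N"
      using ancestor_distinct_path[OF ma] by blast
    have sa: "set xs \<subseteq> ancestors i N" using path_subset_ancestors[OF xs(5,2,4)] .
    have "set xs \<subseteq> {..<n}" using sa ancestors_subset_lessThan[OF DN(2) i] by blast
    moreover have "length xs \<le> K"
    proof -
      have "finite (ancestors i N)" using ancestors_subset_lessThan[OF DN(2) i] finite_subset by blast
      then have "card (set xs) \<le> card (ancestors i N)" using sa by (intro card_mono) auto
      then show ?thesis using distinct_card[OF xs(1)] K by simp
    qed
    moreover have "j < n" using m(2) DN(1) by (auto simp: offdiag_def)
    ultimately have "(xs, j) \<in> Y" using xs m(2) by (simp add: Y_def paths_def)
    then show "j \<in> snd ` Y" by force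
  qed
  have "card (learned i (I, D, N)) \<le> card (snd ` Y)" using sub fY by (intro card_mono) auto
  also have "\<dots> \<le> card Y" using fY by (rule card_image_le)
  finally show ?thesis by (simp add: reach_count_def Y_def)
qed

lemma prob_reach_count_ge_le:
  assumes r: "0 \<le> a" "0 \<le> b" "0 \<le> d" "a + b + d = 1" and t: "0 < t"
  shows "prob n a b d (\<lambda>f. t \<le> real (reach_count n i K (direct n f) (indirect n f)))
       \<le> real n * (a + b) * (\<Sum>l\<le>K. (real n * a) ^ l) / t"
proof -
  have "prob n a b d (\<lambda>f. t \<le> real (reach_count n i K (direct n f) (indirect n f)))
      \<le> expect n a b d (\<lambda>f. real (reach_count n i K (direct n f) (indirect n f))) / t"
    using r t by (intro markov_inequality) auto
  also have "expect n a b d (\<lambda>f. real (reach_count n i K (direct n f) (indirect n f)))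
      = (\<Sum>y\<in>paths n i K \<times> {..<n}. prob n a b d (\<lambda>f. path_edges (fst y) \<subseteq> indirect n f \<and> (hd (fst y), snd y) \<in> direct n f))"
    unfolding reach_count_def by (rule expect_card) simp
  also have "\<dots> \<le> (\<Sum>y\<in>paths n i K \<times> {..<n}. a ^ (length (fst y) - 1) * (a + b))"
    using r by (intro sum_mono prob_path_direct_le) auto
  also have "\<dots> = (\<Sum>(xs,j)\<in>paths n i K \<times> {..<n}. a ^ (length xs - 1) * (a + b))"
    by (simp add: case_prod_beta)
  also have "\<dots> = (\<Sum>xs\<in>paths n i K. \<Sum>j<n. a ^ (length xs - 1) * (a + b))"
    by (rule sum.cartesian_product[symmetric])
  also have "\<dots> = real n * (a + b) * (\<Sum>xs\<in>paths n i K. a ^ (length xs - 1))"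
    by (simp add: sum_distrib_left mult_ac)
  also have "\<dots> \<le> real n * (a + b) * (\<Sum>l\<le>K. (real n * a) ^ l)"
    using r by (intro mult_left_mono sum_paths_le) auto
  finally show ?thesis using t by (simp add: divide_right_mono)
qed

lemma prob_learned_gt_le_split:
  assumes i: "i < n" and pq: "0 \<le> p" "p \<le> 1" "0 \<le> q" "q \<le> 1" and \<delta>: "0 \<le> \<delta>" "\<delta> \<le> 1"
  shows "prob_event n p q \<delta> (\<lambda>\<omega>. t < real (card (learned i \<omega>)))
    \<le> prob n (q * q * \<delta>) (q * q * (1 - \<delta>)) (1 - q * q) (\<lambda>f. K \<le> card (ancestors i (indirect n f)))
      + prob n (q * q * \<delta>) (q * q * (1 - \<delta>)) (1 - q * q)
          (\<lambda>f. t \<le> real (reach_count n i K (direct n f) (indirect n f)))"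
proof -
  define E where "E D N = (K \<le> card (ancestors i N) \<or> t \<le> real (reach_count n i K D N))" for D N
  have "prob_event n p q \<delta> (\<lambda>\<omega>. t < real (card (learned i \<omega>)))
      \<le> prob_event n p q \<delta> (\<lambda>\<omega>. E (fst (snd \<omega>)) (snd (snd \<omega>)))"
  proof (rule prob_event_mono[OF pq \<delta>])
    fix w assume w: "w \<in> outcomes n" and learned: "t < real (card (learned i w))"
    obtain I D N where IDN: "w = (I, D, N)" "D \<subseteq> offdiag n" "N \<subseteq> D"
      using w by (auto simp: outcomes_def)
    show "E (fst (snd w)) (snd (snd w))"
    proof (cases "card (ancestors i N) < K")
      case True
      then have "card (learned i w) \<le> reach_count n i K D N"
        using card_learned_le_reach_count[OF i IDN(2) _ True] IDN by auto
      then show ?thesis using learned IDN(1) by (simp add: E_def)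
    qed (simp add: E_def IDN(1))
  qed
  also have "\<dots> = prob n (q * q * \<delta>) (q * q * (1 - \<delta>)) (1 - q * q) (\<lambda>f. E (direct n f) (indirect n f))"
    by (rule prob_event_eq_prob)
  also have "\<dots> \<le> prob n (q * q * \<delta>) (q * q * (1 - \<delta>)) (1 - q * q) (\<lambda>f. K \<le> card (ancestors i (indirect n f)))
      + prob n (q * q * \<delta>) (q * q * (1 - \<delta>)) (1 - q * q)
          (\<lambda>f. t \<le> real (reach_count n i K (direct n f) (indirect n f)))"
    unfolding E_def using pq \<delta> by (intro prob_disj_le) (auto simp: mult_le_one)
  finally show ?thesis .
qed

lemma prob_learned_gt_le:
  assumes i: "i < n" and n: "2 \<le> n" and pq: "0 \<le> p" "p \<le> 1" "0 \<le> q" "q \<le> 1"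
    and \<delta>: "0 < \<delta>" "\<delta> \<le> 1" and r: "r = \<delta> * iota q q * real n"
    and c: "0 < c" "c < 1" "c < r" "r < 2" and K: "0 < K" and t: "0 < t"
    and ratio: "\<forall>k\<in>{1..<K}. c * c \<le> (r / c) ^ (k - 1) * ((1 - r / real n) / (1 - c / real n)) ^ (k * n)"
  shows "prob_event n p q \<delta> (\<lambda>\<omega>. t < real (card (learned i \<omega>)))
    \<le> 1 - c * c + 1 / ((1 - c) * real K) + 2 / \<delta> * (real K + 1) * 2 ^ K / t"
proof -
  define a b d where "a = q * q * \<delta>" and "b = q * q * (1 - \<delta>)" and "d = 1 - q * q"
  have nn: "2 \<le> real n" using n by simp
  have na: "real n * a = r" using r by (simp add: a_def iota_def)
  have "q * q \<le> 1" "q * q * \<delta> \<le> q * q" using pq \<delta> by (simp_all add: mult_le_one mult_right_le_one_le)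
  then have abd: "0 \<le> a" "0 \<le> b" "0 \<le> d" "a + b + d = 1"
    using pq \<delta> by (auto simp: a_def b_def d_def algebra_simps)
  have "real n * a < real n * 1" using na c nn by simp
  then have "a < 1" using nn by simp
  moreover have "c / real n \<le> a" using na c nn by (simp add: field_simps)
  ultimately have a: "0 < c / real n" "c / real n \<le> a" "a < 1" "real n * (c / real n) < 1"
    using c nn by auto
  have "a / (c / real n) = r / c" "1 - a = 1 - r / real n"
    using na nn by (auto simp: field_simps)
  then have "prob n a b d (\<lambda>f. K \<le> card (ancestors i (indirect n f))) \<le> 1 - c * c + 1 / ((1 - c) * real K)"
    using prob_many_ancestors_le[OF i a abd(4) K, of "c * c"] ratio c nn by (simp add: mult_le_one)
  moreover have "prob n a b d (\<lambda>f. t \<le> real (reach_count n i K (direct n f) (indirect n f)))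
      \<le> 2 / \<delta> * (real K + 1) * 2 ^ K / t"
  proof -
    have "(\<Sum>l\<le>K. (real n * a) ^ l) \<le> (\<Sum>l\<le>K. 2 ^ K)"
      unfolding na using c by (intro sum_mono order_trans[OF power_mono power_increasing[of _ K "2::real"]]) auto
    moreover have "real n * (a + b) \<le> 2 / \<delta>"
      using r c \<delta> by (simp add: a_def b_def iota_def field_simps)
    moreover have "0 \<le> (\<Sum>l\<le>K. (real n * a) ^ l)" using abd by (intro sum_nonneg) simp
    ultimately have "real n * (a + b) * (\<Sum>l\<le>K. (real n * a) ^ l) \<le> 2 / \<delta> * ((real K + 1) * 2 ^ K)"
      using \<delta> by (intro mult_mono) (auto simp: add.commute)
    then have "real n * (a + b) * (\<Sum>l\<le>K. (real n * a) ^ l) / t \<le> 2 / \<delta> * (real K + 1) * 2 ^ K / t"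
      using t by (intro divide_right_mono) (simp_all only: mult.assoc less_imp_le)
    with prob_reach_count_ge_le[OF abd t, of n i K] show ?thesis by (rule order_trans)
  qed
  ultimately show ?thesis
    using prob_learned_gt_le_split[OF i pq less_imp_le[OF \<delta>(1)] \<delta>(2), of t K]
    unfolding a_def b_def d_def by linarith
qed

section \<open>The critical limit\<close>

lemma exp_neg_le_power:
  fixes u :: real
  assumes "0 \<le> u" "u < 1"
  shows "exp (- (real m * (u / (1 - u)))) \<le> (1 - u) ^ m"
proof -
  have "1 / (1 - u) = 1 + u / (1 - u)" using assms by (simp add: field_simps)
  also have "\<dots> \<le> exp (u / (1 - u))" by (rule exp_ge_add_one_self)
  finally have "1 / (1 - u) \<le> exp (u / (1 - u))" .
  then have one_step: "exp (- (u / (1 - u))) \<le> 1 - u" using assms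
    by (simp add: exp_minus field_simps)
  have "exp (- (real m * (u / (1 - u)))) = exp (- (u / (1 - u))) ^ m"
    by (simp add: exp_of_nat_mult[symmetric])
  also have "\<dots> \<le> (1 - u) ^ m" using one_step by (intro power_mono) auto
  finally show ?thesis .
qed

lemma exp_le_power_ratio:
  fixes a a' :: real
  assumes "0 < a'" "a' \<le> a" "a < 1"
  shows "exp (- (real m * ((a - a') / (1 - a)))) \<le> ((1 - a) / (1 - a')) ^ m"
proof -
  define u where "u = (a - a') / (1 - a')"
  have u: "0 \<le> u" "u < 1" using assms by (auto simp: u_def field_simps)
  have pos: "0 < 1 - a" "0 < 1 - a'" using assms by auto
  have "1 - u = (1 - a) / (1 - a')" using pos by (simp add: u_def field_simps)
  moreover have "u / ((1 - a) / (1 - a')) = (a - a') / (1 - a)"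
    unfolding u_def using pos by (simp add: divide_divide_eq_left')
  ultimately show ?thesis using exp_neg_le_power[OF u, of m] by (simp only:)
qed

lemma le_inverse_power_mult_exp:
  fixes c :: real
  assumes c: "0 < c" and k: "1 \<le> k"
  shows "c \<le> (1 / c) ^ (k - 1) * exp (- (real k * (1 - c)))"
proof -
  obtain j where kj: "k = Suc j" using k by (cases k) auto
  have "c = (1 / c) ^ (k - 1) * c ^ k" using c by (simp add: kj power_one_over field_simps)
  also have "\<dots> \<le> (1 / c) ^ (k - 1) * exp (c - 1) ^ k"
    using c exp_ge_add_one_self[of "c - 1"] by (intro mult_left_mono power_mono) auto
  also have "exp (c - 1) ^ k = exp (- (real k * (1 - c)))"
    by (simp add: exp_of_nat_mult[symmetric] algebra_simps)
  finally show ?thesis .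
qed

lemma exp_le_ancestor_ratio:
  fixes x c :: real
  assumes "0 < c" "c \<le> x" "x < 2" "2 \<le> n"
  shows "exp (- (real k * ((x - c) / (1 - x / real n)))) \<le> ((1 - x / real n) / (1 - c / real n)) ^ (k * n)"
proof -
  have n: "2 \<le> real n" using assms by simp
  have eq: "real (k * n) * ((x / real n - c / real n) / (1 - x / real n)) = real k * ((x - c) / (1 - x / real n))"
    using n assms by (simp add: field_simps)
  have "exp (- (real (k * n) * ((x / real n - c / real n) / (1 - x / real n))))
      \<le> ((1 - x / real n) / (1 - c / real n)) ^ (k * n)"
    using assms n by (intro exp_le_power_ratio) (auto simp: field_simps)
  then show ?thesis by (simp only: eq)
qed

lemma eventually_ancestor_ratio_ge:
  fixes r :: "nat \<Rightarrow> real"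
  assumes r: "r \<longlonglongrightarrow> 1" and c: "0 < c" "c < 1"
  shows "\<forall>\<^sub>F n in sequentially. \<forall>k\<in>{1..<K}.
           c * c \<le> (r n / c) ^ (k - 1) * ((1 - r n / real n) / (1 - c / real n)) ^ (k * n)"
proof -
  define L where "L n k = (r n / c) ^ (k - 1) * exp (- (real k * ((r n - c) / (1 - r n / real n))))" for n k
  have r_div: "(\<lambda>n. r n / real n) \<longlonglongrightarrow> 0"
    using tendsto_mult[OF r lim_inverse_n] by (simp add: divide_inverse)
  have "\<forall>\<^sub>F n in sequentially. \<forall>k\<in>{1..<K}. c * c < L n k"
  proof (rule eventually_ball_finite)
    show "\<forall>k\<in>{1..<K}. \<forall>\<^sub>F n in sequentially. c * c < L n k"
    proof
      fix k assume k: "k \<in> {1..<K}"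
      have "(\<lambda>n. L n k) \<longlonglongrightarrow> (1 / c) ^ (k - 1) * exp (- (real k * ((1 - c) / (1 - 0))))"
        unfolding L_def using c by (intro tendsto_intros r r_div) auto
      moreover have "c * c < (1 / c) ^ (k - 1) * exp (- (real k * ((1 - c) / (1 - 0))))"
        using le_inverse_power_mult_exp[OF c(1), of k] k c by (auto intro: less_le_trans[of _ c])
      ultimately show "\<forall>\<^sub>F n in sequentially. c * c < L n k" by (rule order_tendstoD(1))
    qed
  qed simp
  moreover have "\<forall>\<^sub>F n in sequentially. c < r n" using order_tendstoD(1)[OF r c(2)] .
  moreover have "\<forall>\<^sub>F n in sequentially. r n < 2" using order_tendstoD(2)[OF r] by simp
  moreover have "\<forall>\<^sub>F n in sequentially. 2 \<le> n" by (rule eventually_ge_at_top)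
  ultimately show ?thesis
  proof eventually_elim
    case (elim n)
    show ?case
    proof
      fix k assume "k \<in> {1..<K}"
      then have "c * c < L n k" using elim by auto
      also have "L n k \<le> (r n / c) ^ (k - 1) * ((1 - r n / real n) / (1 - c / real n)) ^ (k * n)"
        unfolding L_def using elim c
        by (intro mult_left_mono exp_le_ancestor_ratio) auto
      finally show "c * c \<le> (r n / c) ^ (k - 1) * ((1 - r n / real n) / (1 - c / real n)) ^ (k * n)"
        by (rule less_imp_le)
    qed
  qed
qed

lemma eventually_prob_learned_gt_le:
  fixes p q \<omega> r :: "nat \<Rightarrow> real" and i :: "nat \<Rightarrow> nat"
  assumes \<delta>: "0 < \<delta>" "\<delta> \<le> 1" and pq: "\<And>n. 0 \<le> p n \<and> p n \<le> 1" "\<And>n. 0 \<le> q n \<and> q n \<le> 1"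
    and r: "\<And>n. r n = \<delta> * iota (q n) (q n) * real n" "r \<longlonglongrightarrow> 1"
    and \<omega>: "filterlim \<omega> at_top sequentially" and i: "\<And>n. 2 \<le> n \<Longrightarrow> i n < n"
    and e: "0 < e" "e < 1"
  shows "\<forall>\<^sub>F n in sequentially. prob_event n (p n) (q n) \<delta> (\<lambda>\<omega>'. \<omega> n < real (card (learned (i n) \<omega>'))) \<le> 4 * e"
proof -
  define K where "K = nat \<lceil>1 / (e * e)\<rceil> + 1"
  define M where "M = 2 / \<delta> * (real K + 1) * 2 ^ K"
  have K: "1 / (e * e) \<le> real K" "0 < K" unfolding K_def by linarith+
  then have K_e: "1 / (e * real K) \<le> e" using e by (simp add: field_simps)
  have M: "0 < M / e" using \<delta> e by (simp add: M_def)
  have "\<forall>\<^sub>F n in sequentially. \<forall>k\<in>{1..<K}. (1 - e) * (1 - e)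
          \<le> (r n / (1 - e)) ^ (k - 1) * ((1 - r n / real n) / (1 - (1 - e) / real n)) ^ (k * n)"
    using eventually_ancestor_ratio_ge[OF r(2)] e by simp
  moreover have "\<forall>\<^sub>F n in sequentially. 1 - e < r n" using order_tendstoD(1)[OF r(2)] e by simp
  moreover have "\<forall>\<^sub>F n in sequentially. r n < 2" using order_tendstoD(2)[OF r(2)] by simp
  moreover have "\<forall>\<^sub>F n in sequentially. M / e \<le> \<omega> n" using \<omega> by (simp add: filterlim_at_top)
  moreover have "\<forall>\<^sub>F n in sequentially. 2 \<le> n" by (rule eventually_ge_at_top)
  ultimately show ?thesis
  proof eventually_elim
    case (elim n)
    then have "0 < \<omega> n" using M by linarith
    with elim have \<omega>n: "0 < \<omega> n" "M / \<omega> n \<le> e" using e by (simp_all add: field_simps)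
    have "prob_event n (p n) (q n) \<delta> (\<lambda>\<omega>'. \<omega> n < real (card (learned (i n) \<omega>')))
        \<le> 1 - (1 - e) * (1 - e) + 1 / ((1 - (1 - e)) * real K) + M / \<omega> n"
      unfolding M_def using \<delta> pq elim e K(2) \<omega>n(1)
      by (intro prob_learned_gt_le[OF i[OF elim(5)] elim(5) _ _ _ _ _ _ r(1)]) auto
    also have "\<dots> = 2 * e - e * e + 1 / (e * real K) + M / \<omega> n" by (simp add: algebra_simps)
    also have "\<dots> \<le> 4 * e" using K_e \<omega>n(2) zero_le_square[of e] by linarith
    finally show ?case .
  qed
qed

theorem mainTheorem14:
  fixes \<delta> :: real and p q \<omega> :: "nat \<Rightarrow> real" and i :: "nat \<Rightarrow> nat"
  assumes "0 < \<delta>" "\<delta> \<le> 1"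
    and "\<And>n. 0 < p n \<and> p n < 1"
    and "\<And>n. 0 \<le> q n \<and> q n \<le> 1"
    and critical: "(\<lambda>n. \<delta> * iota (q n) (q n) * real n) \<longlonglongrightarrow> 1"
    and "filterlim \<omega> at_top sequentially"
    and "\<And>n. n \<ge> 2 \<Longrightarrow> i n < n"
  shows "(\<lambda>n. prob_event n (p n) (q n) \<delta>
                (\<lambda>\<omega>'. real (card (learned (i n) \<omega>')) > \<omega> n)) \<longlonglongrightarrow> 0"
proof (rule tendstoI)
  fix \<epsilon> :: real assume "0 < \<epsilon>"
  define e where "e = min \<epsilon> 1 / 8"
  have e: "0 < e" "e < 1" "4 * e < \<epsilon>" using \<open>0 < \<epsilon>\<close> by (auto simp: e_def)
  have p: "\<And>n. 0 \<le> p n \<and> p n \<le> 1" using assms(3) less_imp_le by blast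
  have "\<forall>\<^sub>F n in sequentially. prob_event n (p n) (q n) \<delta> (\<lambda>\<omega>'. \<omega> n < real (card (learned (i n) \<omega>'))) \<le> 4 * e"
    using eventually_prob_learned_gt_le[OF assms(1,2) p assms(4) _ critical assms(6,7) e(1,2)] by simp
  then show "\<forall>\<^sub>F n in sequentially. dist (prob_event n (p n) (q n) \<delta>
                (\<lambda>\<omega>'. real (card (learned (i n) \<omega>')) > \<omega> n)) 0 < \<epsilon>"
  proof (rule eventually_mono)
    fix n
    have "0 \<le> prob_event n (p n) (q n) \<delta> (\<lambda>\<omega>'. \<omega> n < real (card (learned (i n) \<omega>')))"
      using assms(1,2,4) p by (intro prob_event_nonneg) auto
    then show "prob_event n (p n) (q n) \<delta> (\<lambda>\<omega>'. \<omega> n < real (card (learned (i n) \<omega>'))) \<le> 4 * e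
        \<Longrightarrow> dist (prob_event n (p n) (q n) \<delta> (\<lambda>\<omega>'. \<omega> n < real (card (learned (i n) \<omega>')))) 0 < \<epsilon>"
      using e by simp
  qed
qed

end
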